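(* Let $\mathbb{F}_q$ be a finite field and $n\geq 1$. Fix any $P_0\in\mathbb{P}^n(\mathbb{F}_q)$ and $P_1,P_2\in\mathbb{P}^1(\mathbb{F}_q)$ with $P_1\neq P_2$. Then there exists a rational map $h\colon \mathbb{P}^n\dashrightarrow\mathbb{P}^1$ defined over $\mathbb{F}_q$ such that $h(P_0)=P_1$ and $h(P)=P_2$ for all $P\in\mathbb{P}^n(\mathbb{F}_q)\setminus\{P_0\}$ (in particular $h$ is defined at every point of $\mathbb{P}^n(\mathbb{F}_q)$). *)

theory Defs
  imports Main "HOL-Library.Poly_Mapping"
begin

(* Multivariate polynomials in variables X_0, X_1, ... with coefficients in 'a,
   represented (as in the AFP MPoly library) as finitely supported maps from
   monomials (finitely supported exponent vectors nat =>0 nat) to coefficients.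
   Multiplication is the convolution product from Poly_Mapping. *)
type_synonym 'a mpol = "(nat \<Rightarrow>\<^sub>0 nat) \<Rightarrow>\<^sub>0 'a"

definition mpol_eval :: "'a::comm_semiring_1 mpol \<Rightarrow> (nat \<Rightarrow> 'a) \<Rightarrow> 'a" where
  "mpol_eval p x = (\<Sum>m\<in>Poly_Mapping.keys p.
       Poly_Mapping.lookup p m * (\<Prod>i\<in>Poly_Mapping.keys m. x i ^ Poly_Mapping.lookup m i))"

definition homog :: "nat \<Rightarrow> nat \<Rightarrow> 'a::zero mpol \<Rightarrow> bool" where
  "homog n d p \<longleftrightarrow> (\<forall>m\<in>Poly_Mapping.keys p.
       (\<forall>i\<in>Poly_Mapping.keys m. i \<le> n) \<and> (\<Sum>i\<in>Poly_Mapping.keys m. Poly_Mapping.lookup m i) = d)"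

definition proj_pt :: "nat \<Rightarrow> (nat \<Rightarrow> 'a::field) \<Rightarrow> bool" where
  "proj_pt n x \<longleftrightarrow> (\<exists>i\<le>n. x i \<noteq> 0) \<and> (\<forall>i>n. x i = 0)"

definition proj_eq :: "(nat \<Rightarrow> 'a::field) \<Rightarrow> (nat \<Rightarrow> 'a) \<Rightarrow> bool" where
  "proj_eq x y \<longleftrightarrow> (\<exists>c. c \<noteq> 0 \<and> y = (\<lambda>i. c * x i))"

definition proj1_pt :: "'a::field \<times> 'a \<Rightarrow> bool" where
  "proj1_pt v \<longleftrightarrow> v \<noteq> (0, 0)"

definition proj1_eq :: "'a::field \<times> 'a \<Rightarrow> 'a \<times> 'a \<Rightarrow> bool" where
  "proj1_eq v w \<longleftrightarrow> (\<exists>c. c \<noteq> 0 \<and> fst w = c * fst v \<and> snd w = c * snd v)"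

(* A rational map P^n --> P^1 defined over F is given by a pair [F : G] of homogeneous
   polynomials of the same degree with coefficients in F, not both zero;
   two pairs define the same rational map iff F * G' = F' * G. *)
definition rat_map_rep :: "nat \<Rightarrow> 'a::field mpol \<times> 'a mpol \<Rightarrow> bool" where
  "rat_map_rep n h \<longleftrightarrow> (\<exists>d. homog n d (fst h) \<and> homog n d (snd h)) \<and> h \<noteq> (0, 0)"

definition rat_map_equiv :: "'a::field mpol \<times> 'a mpol \<Rightarrow> 'a mpol \<times> 'a mpol \<Rightarrow> bool" where
  "rat_map_equiv h h' \<longleftrightarrow> fst h * snd h' = fst h' * snd h"

definition rat_map_value :: "nat \<Rightarrow> 'a::field mpol \<times> 'a mpol \<Rightarrow> (nat \<Rightarrow> 'a) \<Rightarrow> 'a \<times> 'a \<Rightarrow> bool" where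
  "rat_map_value n h x v \<longleftrightarrow> (\<exists>h'. rat_map_rep n h' \<and> rat_map_equiv h h' \<and>
      proj1_pt (mpol_eval (fst h') x, mpol_eval (snd h') x) \<and>
      proj1_eq (mpol_eval (fst h') x, mpol_eval (snd h') x) v)"

end

theory Submission
  imports Defs
begin

(* With e = q - 1, the power y^e is 1 for y \<noteq> 0 and 0 for y = 0. Hence the form
     Theta(y_0,...,y_r) = \<Sum>_j y_j^(e(r+1-j)) \<Prod>_{i<j} (y_j^e - y_i^e),
   homogeneous of degree e(r+1), takes the value 1 at every nonzero vector over F_q and 0 at
   the zero vector: only the term of the first nonzero coordinate survives, and it equals 1.
   If P0 = (a_0 : ... : a_n) with a_k \<noteq> 0, then Psi = Theta(a_k X_i - a_i X_k)_i vanishes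
   exactly at the rational point P0 and is 1 at all the others, while Phi = Theta(X) - Psi is
   the complementary indicator. So h = [u_1 Phi + u_2 Psi : v_1 Phi + v_2 Psi] maps P0 to
   P1 = (u_1 : v_1) and every other rational point to P2 = (u_2 : v_2). *)

definition monomial_eval :: "(nat \<Rightarrow>\<^sub>0 nat) \<Rightarrow> (nat \<Rightarrow> 'a::comm_monoid_mult) \<Rightarrow> 'a" where
  "monomial_eval m x = (\<Prod>i\<in>Poly_Mapping.keys m. x i ^ Poly_Mapping.lookup m i)"

lemma monomial_eval_superset:
  assumes "finite T" "Poly_Mapping.keys m \<subseteq> T"
  shows "monomial_eval m x = (\<Prod>i\<in>T. x i ^ Poly_Mapping.lookup m i)"
  unfolding monomial_eval_def
  by (rule prod.mono_neutral_left) (use assms in \<open>auto simp: in_keys_iff\<close>)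

lemma monomial_eval_zero [simp]: "monomial_eval 0 x = 1"
  by (simp add: monomial_eval_def)

lemma monomial_eval_add: "monomial_eval (a + b) x = monomial_eval a x * monomial_eval b x"
proof -
  let ?T = "Poly_Mapping.keys a \<union> Poly_Mapping.keys b"
  have "monomial_eval (a + b) x = (\<Prod>i\<in>?T. x i ^ Poly_Mapping.lookup (a + b) i)"
    using keys_add[of a b] by (intro monomial_eval_superset) auto
  also have "\<dots> = (\<Prod>i\<in>?T. x i ^ Poly_Mapping.lookup a i) * (\<Prod>i\<in>?T. x i ^ Poly_Mapping.lookup b i)"
    by (simp add: lookup_add power_add prod.distrib)
  also have "\<dots> = monomial_eval a x * monomial_eval b x"
    by (subst (1 2) monomial_eval_superset[of ?T]) auto
  finally show ?thesis .
qed

lemma mpol_eval_conv_monomial_eval: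
  "mpol_eval p x = (\<Sum>m\<in>Poly_Mapping.keys p. Poly_Mapping.lookup p m * monomial_eval m x)"
  by (simp add: mpol_eval_def monomial_eval_def)

lemma mpol_eval_superset:
  assumes "finite S" "Poly_Mapping.keys p \<subseteq> S"
  shows "mpol_eval p x = (\<Sum>m\<in>S. Poly_Mapping.lookup p m * monomial_eval m x)"
  unfolding mpol_eval_conv_monomial_eval
  by (rule sum.mono_neutral_left) (use assms in \<open>auto simp: in_keys_iff\<close>)

lemma mpol_eval_zero [simp]: "mpol_eval 0 x = 0"
  by (simp add: mpol_eval_def)

lemma mpol_eval_single: "mpol_eval (Poly_Mapping.single m c) x = c * monomial_eval m x"
  by (simp add: mpol_eval_conv_monomial_eval)

lemma mpol_eval_one [simp]: "mpol_eval 1 x = 1"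
  using mpol_eval_single[of 0 1 x] by simp

lemma mpol_eval_add: "mpol_eval (p + q) x = mpol_eval p x + mpol_eval q x"
proof -
  let ?S = "Poly_Mapping.keys p \<union> Poly_Mapping.keys q"
  have "mpol_eval (p + q) x = (\<Sum>m\<in>?S. Poly_Mapping.lookup (p + q) m * monomial_eval m x)"
    using keys_add[of p q] by (intro mpol_eval_superset) auto
  also have "\<dots> = (\<Sum>m\<in>?S. Poly_Mapping.lookup p m * monomial_eval m x)
                  + (\<Sum>m\<in>?S. Poly_Mapping.lookup q m * monomial_eval m x)"
    by (simp add: lookup_add distrib_right sum.distrib)
  also have "\<dots> = mpol_eval p x + mpol_eval q x"
    by (subst (1 2) mpol_eval_superset[of ?S]) auto
  finally show ?thesis .
qed

lemma mpol_eval_sum: "mpol_eval (sum f A) x = (\<Sum>a\<in>A. mpol_eval (f a) x)"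
  by (induction A rule: infinite_finite_induct) (auto simp: mpol_eval_add)

lemma poly_mapping_sum_single:
  "p = (\<Sum>m\<in>Poly_Mapping.keys p. Poly_Mapping.single m (Poly_Mapping.lookup p m))"
  by (rule poly_mapping_eqI)
     (auto simp: lookup_sum lookup_single when_def in_keys_iff
           intro!: sum.neutral[symmetric] elim!: sum.remove[THEN trans])

lemma mpol_eval_mult: "mpol_eval (p * q) x = mpol_eval p x * mpol_eval q x"
proof -
  let ?mono = "\<lambda>p m. Poly_Mapping.single m (Poly_Mapping.lookup p m)"
  have "p * q = (\<Sum>a\<in>Poly_Mapping.keys p. \<Sum>b\<in>Poly_Mapping.keys q. ?mono p a * ?mono q b)"
    by (subst (1 2) poly_mapping_sum_single) (simp only: sum_product)
  then have "mpol_eval (p * q) x = (\<Sum>a\<in>Poly_Mapping.keys p. \<Sum>b\<in>Poly_Mapping.keys q.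
      (Poly_Mapping.lookup p a * monomial_eval a x) * (Poly_Mapping.lookup q b * monomial_eval b x))"
    by (simp add: mpol_eval_sum mult_single mpol_eval_single monomial_eval_add mult_ac)
  also have "\<dots> = mpol_eval p x * mpol_eval q x"
    by (simp add: mpol_eval_conv_monomial_eval sum_product)
  finally show ?thesis .
qed

lemma mpol_eval_power: "mpol_eval (p ^ k) x = mpol_eval p x ^ k"
  by (induction k) (auto simp: mpol_eval_mult)

lemma mpol_eval_prod: "mpol_eval (prod f A) x = (\<Prod>a\<in>A. mpol_eval (f a) x)"
  by (induction A rule: infinite_finite_induct) (auto simp: mpol_eval_mult)

lemma mpol_eval_diff:
  "mpol_eval (p - q) (x :: nat \<Rightarrow> 'a::comm_ring_1) = mpol_eval p x - mpol_eval q x"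
  using mpol_eval_add[of "p - q" q x] by (simp add: eq_diff_eq)

definition mpol_var :: "nat \<Rightarrow> 'a::comm_semiring_1 mpol" where
  "mpol_var i = Poly_Mapping.single (Poly_Mapping.single i 1) 1"

definition mpol_const :: "'a::comm_semiring_1 \<Rightarrow> 'a mpol" where
  "mpol_const c = Poly_Mapping.single 0 c"

lemma mpol_eval_var [simp]: "mpol_eval (mpol_var i) x = x i"
  by (simp add: mpol_var_def mpol_eval_single monomial_eval_def)

lemma mpol_eval_const [simp]: "mpol_eval (mpol_const c) x = c"
  by (simp add: mpol_const_def mpol_eval_single)

definition monomial_degree :: "(nat \<Rightarrow>\<^sub>0 nat) \<Rightarrow> nat" where
  "monomial_degree m = (\<Sum>i\<in>Poly_Mapping.keys m. Poly_Mapping.lookup m i)"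

lemma monomial_degree_superset:
  assumes "finite T" "Poly_Mapping.keys m \<subseteq> T"
  shows "monomial_degree m = (\<Sum>i\<in>T. Poly_Mapping.lookup m i)"
  unfolding monomial_degree_def
  by (rule sum.mono_neutral_left) (use assms in \<open>auto simp: in_keys_iff\<close>)

lemma monomial_degree_add: "monomial_degree (a + b) = monomial_degree a + monomial_degree b"
proof -
  let ?T = "Poly_Mapping.keys a \<union> Poly_Mapping.keys b"
  have "monomial_degree (a + b) = (\<Sum>i\<in>?T. Poly_Mapping.lookup (a + b) i)"
    using keys_add[of a b] by (intro monomial_degree_superset) auto
  also have "\<dots> = monomial_degree a + monomial_degree b"
    by (simp add: lookup_add sum.distrib monomial_degree_superset[of ?T])
  finally show ?thesis .
qed

lemma homog_iff_monomial_degree: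
  "homog n d p \<longleftrightarrow>
     (\<forall>m\<in>Poly_Mapping.keys p. (\<forall>i\<in>Poly_Mapping.keys m. i \<le> n) \<and> monomial_degree m = d)"
  by (simp add: homog_def monomial_degree_def)

lemma homog_zero [simp]: "homog n d 0"
  by (simp add: homog_def)

lemma homog_one: "homog n 0 1"
  by (simp add: homog_def)

lemma homog_add: "homog n d p \<Longrightarrow> homog n d q \<Longrightarrow> homog n d (p + q)"
  using keys_add[of p q] unfolding homog_def by blast

lemma homog_diff: "homog n d p \<Longrightarrow> homog n d q \<Longrightarrow> homog n d (p - q)"
  using keys_diff[of p q] unfolding homog_def by blast

lemma homog_mult:
  assumes "homog n d p" "homog n e q"
  shows "homog n (d + e) (p * q)"
  unfolding homog_iff_monomial_degree
proof
  fix m assume "m \<in> Poly_Mapping.keys (p * q)"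
  then obtain a b where "m = a + b" "a \<in> Poly_Mapping.keys p" "b \<in> Poly_Mapping.keys q"
    using keys_mult[of p q] by blast
  moreover have "Poly_Mapping.keys (a + b) \<subseteq> Poly_Mapping.keys a \<union> Poly_Mapping.keys b"
    by (rule keys_add)
  ultimately show "(\<forall>i\<in>Poly_Mapping.keys m. i \<le> n) \<and> monomial_degree m = d + e"
    using assms unfolding homog_iff_monomial_degree by (auto simp: monomial_degree_add)
qed

lemma homog_power: "homog n d p \<Longrightarrow> homog n (k * d) (p ^ k)"
  by (induction k) (auto simp: homog_one dest: homog_mult)

lemma homog_sum: "(\<And>a. a \<in> A \<Longrightarrow> homog n d (f a)) \<Longrightarrow> homog n d (sum f A)"
  by (induction A rule: infinite_finite_induct) (auto intro: homog_add)

lemma homog_prod: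
  "(\<And>a. a \<in> A \<Longrightarrow> homog n (d a) (f a)) \<Longrightarrow> homog n (sum d A) (prod f A)"
  by (induction A rule: infinite_finite_induct) (auto simp: homog_one intro: homog_mult)

lemma homog_var: "i \<le> n \<Longrightarrow> homog n 1 (mpol_var i)"
  by (simp add: homog_def mpol_var_def)

lemma homog_const: "homog n 0 (mpol_const c)"
  by (simp add: homog_def mpol_const_def)

lemma finite_field_card_ge_2: "card (UNIV :: 'a::{finite,field} set) \<ge> 2"
proof -
  have "card {0::'a, 1} \<le> card (UNIV :: 'a set)"
    by (rule card_mono) auto
  then show ?thesis by simp
qed

lemma finite_field_power_card_minus_one:
  fixes a :: "'a::{finite,field}"
  assumes "a \<noteq> 0"
  shows "a ^ (card (UNIV :: 'a set) - 1) = 1"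
proof -
  let ?U = "UNIV - {0::'a}"
  have "(\<Prod>y\<in>?U. a * y) = a ^ (card (UNIV :: 'a set) - 1) * \<Prod>?U"
    by (simp add: prod.distrib card_Diff_subset)
  moreover have "(\<Prod>y\<in>?U. a * y) = \<Prod>?U"
    by (rule prod.reindex_bij_witness[of _ "\<lambda>y. y / a" "\<lambda>y. a * y"]) (use assms in auto)
  moreover have "\<Prod>?U \<noteq> 0" by simp
  ultimately show ?thesis by simp
qed

definition nonzero_indicator :: "nat \<Rightarrow> nat \<Rightarrow> (nat \<Rightarrow> 'a::comm_ring_1) \<Rightarrow> 'a" where
  "nonzero_indicator e r y = (\<Sum>j\<le>r. y j ^ (e * (r + 1 - j)) * (\<Prod>i<j. y j ^ e - y i ^ e))"

lemma mpol_eval_nonzero_indicator: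
  "mpol_eval (nonzero_indicator e r ys) x = nonzero_indicator e r (\<lambda>j. mpol_eval (ys j) x)"
  by (simp add: nonzero_indicator_def mpol_eval_sum mpol_eval_mult mpol_eval_power
      mpol_eval_prod mpol_eval_diff)

lemma homog_nonzero_indicator:
  assumes "\<And>j. j \<le> r \<Longrightarrow> homog n 1 (ys j)"
  shows "homog n (e * (r + 1)) (nonzero_indicator e r ys)"
  unfolding nonzero_indicator_def
proof (rule homog_sum)
  fix j assume j: "j \<in> {..r}"
  have "homog n (e * (r + 1 - j) * 1 + (\<Sum>i<j. e * 1))
      (ys j ^ (e * (r + 1 - j)) * (\<Prod>i<j. ys j ^ e - ys i ^ e))"
    using j assms by (intro homog_mult homog_power homog_prod homog_diff) auto
  moreover have "e * (r + 1 - j) * 1 + (\<Sum>i<j. e * 1) = e * (r + 1 - j + j)"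
    by (simp add: add_mult_distrib2 mult.commute)
  moreover have "r + 1 - j + j = r + 1"
    using j by simp
  ultimately show "homog n (e * (r + 1)) (ys j ^ (e * (r + 1 - j)) * (\<Prod>i<j. ys j ^ e - ys i ^ e))"
    by simp
qed

lemma nonzero_indicator_eq:
  fixes y :: "nat \<Rightarrow> 'a::field"
  assumes "e \<ge> 1" and power_e: "\<And>a::'a. a \<noteq> 0 \<Longrightarrow> a ^ e = 1"
  shows "nonzero_indicator e r y = (if \<exists>j\<le>r. y j \<noteq> 0 then 1 else 0)"
proof (cases "\<exists>j\<le>r. y j \<noteq> 0")
  case False
  then show ?thesis
    using \<open>e \<ge> 1\<close> by (auto simp: nonzero_indicator_def zero_power intro!: sum.neutral)
next
  case True
  let ?t = "\<lambda>j. y j ^ (e * (r + 1 - j)) * (\<Prod>i<j. y j ^ e - y i ^ e)"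
  define j0 where "j0 = (LEAST j. j \<le> r \<and> y j \<noteq> 0)"
  have j0: "j0 \<le> r" "y j0 \<noteq> 0"
    using LeastI_ex[of "\<lambda>j. j \<le> r \<and> y j \<noteq> 0"] True unfolding j0_def by auto
  have below_j0: "y i = 0" if "i < j0" for i
    using not_less_Least[of i "\<lambda>j. j \<le> r \<and> y j \<noteq> 0"] that j0 unfolding j0_def by auto
  have "?t j0 = 1"
    using power_e[OF j0(2)] below_j0 \<open>e \<ge> 1\<close>
    by (auto simp: power_mult zero_power intro!: prod.neutral)
  moreover have "?t j = 0" if "j \<le> r" "j \<noteq> j0" for j
  proof (cases "y j = 0")
    case True
    then show ?thesis using \<open>e \<ge> 1\<close> \<open>j \<le> r\<close> by (simp add: zero_power)
  next
    case False
    \<comment> \<open>the factor with i = j0 vanishes, both coordinates being nonzero\<close>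
    then have "j0 < j" using below_j0 that by (metis linorder_neqE_nat)
    then have "(\<Prod>i<j. y j ^ e - y i ^ e) = 0"
      using power_e[OF False] power_e[OF j0(2)] by (intro prod_zero) (auto intro!: bexI[of _ j0])
    then show ?thesis by simp
  qed
  ultimately have "nonzero_indicator e r y = 1"
    unfolding nonzero_indicator_def using j0(1)
    by (simp add: sum.remove[of "{..r}" j0] sum.neutral)
  then show ?thesis using True by simp
qed

lemma nonzero_indicator_finite_field:
  "nonzero_indicator (card (UNIV :: 'a::{finite,field} set) - 1) r y =
     (if \<exists>j\<le>r. y j \<noteq> 0 then 1 else (0::'a))"
  using finite_field_card_ge_2[where 'a = 'a]
  by (intro nonzero_indicator_eq finite_field_power_card_minus_one) auto

lemma proj_eq_iff_minors_vanish:
  assumes "proj_pt n p" "proj_pt n x" "k \<le> n" "p k \<noteq> 0"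
  shows "proj_eq p x \<longleftrightarrow> (\<forall>i\<le>n. p k * x i = p i * x k)"
proof
  assume "proj_eq p x"
  then show "\<forall>i\<le>n. p k * x i = p i * x k"
    by (auto simp: proj_eq_def)
next
  assume minors: "\<forall>i\<le>n. p k * x i = p i * x k"
  define c where "c = x k / p k"
  have x_eq: "x i = c * p i" for i
  proof (cases "i \<le> n")
    case True
    then show ?thesis using minors \<open>p k \<noteq> 0\<close> unfolding c_def by (simp add: field_simps)
  next
    case False
    then show ?thesis using assms(1,2) unfolding proj_pt_def by auto
  qed
  moreover have "c \<noteq> 0"
    using \<open>proj_pt n x\<close> x_eq unfolding proj_pt_def by auto
  ultimately show "proj_eq p x"
    unfolding proj_eq_def by auto
qed

definition off_point_form :: "nat \<Rightarrow> (nat \<Rightarrow> 'a::{finite,field}) \<Rightarrow> nat \<Rightarrow> 'a mpol" where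
  "off_point_form n p k = nonzero_indicator (card (UNIV :: 'a set) - 1) n
     (\<lambda>i. mpol_const (p k) * mpol_var i - mpol_const (p i) * mpol_var k)"

lemma homog_off_point_form:
  fixes p :: "nat \<Rightarrow> 'a::{finite,field}"
  assumes "k \<le> n"
  shows "homog n ((card (UNIV :: 'a set) - 1) * (n + 1)) (off_point_form n p k)"
  unfolding off_point_form_def
  using homog_mult[OF homog_const homog_var]
  using assms by (intro homog_nonzero_indicator homog_diff) auto

lemma mpol_eval_off_point_form:
  assumes "proj_pt n p" "proj_pt n x" "k \<le> n" "p k \<noteq> 0"
  shows "mpol_eval (off_point_form n p k) x = (if proj_eq p x then 0 else 1)"
  unfolding off_point_form_def mpol_eval_nonzero_indicator nonzero_indicator_finite_field
  using proj_eq_iff_minors_vanish[OF assms] by (simp add: mpol_eval_diff mpol_eval_mult)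

lemma mpol_eval_nonzero_indicator_vars:
  assumes "proj_pt n (x :: nat \<Rightarrow> 'a::{finite,field})"
  shows "mpol_eval (nonzero_indicator (card (UNIV :: 'a set) - 1) n mpol_var) x = 1"
  unfolding mpol_eval_nonzero_indicator nonzero_indicator_finite_field
  using assms by (simp add: proj_pt_def)

lemma rat_map_value_of_rep:
  assumes "rat_map_rep n h" "(mpol_eval (fst h) x, mpol_eval (snd h) x) = v" "proj1_pt v"
  shows "rat_map_value n h x v"
  unfolding rat_map_value_def
  using assms by (intro exI[of _ h]) (auto simp: rat_map_equiv_def proj1_eq_def intro: exI[of _ 1])

theorem lemma2p5:
  fixes n :: nat and p0 :: "nat \<Rightarrow> 'a::{finite, field}" and p1 p2 :: "'a \<times> 'a"
  assumes "n \<ge> 1"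
    and "proj_pt n p0"
    and "proj1_pt p1" and "proj1_pt p2" and "\<not> proj1_eq p1 p2"
  shows "\<exists>h. rat_map_rep n h \<and> rat_map_value n h p0 p1 \<and>
           (\<forall>x. proj_pt n x \<and> \<not> proj_eq p0 x \<longrightarrow> rat_map_value n h x p2)"
proof -
  obtain k where k: "k \<le> n" "p0 k \<noteq> 0"
    using \<open>proj_pt n p0\<close> unfolding proj_pt_def by blast
  define d where "d = (card (UNIV :: 'a set) - 1) * (n + 1)"
  define Psi where "Psi = off_point_form n p0 k"
  define Phi where "Phi = nonzero_indicator (card (UNIV :: 'a set) - 1) n mpol_var - Psi"
  define h where "h = (mpol_const (fst p1) * Phi + mpol_const (fst p2) * Psi,
                       mpol_const (snd p1) * Phi + mpol_const (snd p2) * Psi)"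
  have "homog n d Psi"
    unfolding Psi_def d_def using k(1) by (rule homog_off_point_form)
  moreover have "homog n d (nonzero_indicator (card (UNIV :: 'a set) - 1) n mpol_var)"
    unfolding d_def by (intro homog_nonzero_indicator homog_var)
  ultimately have "homog n d Psi" "homog n d Phi"
    unfolding Phi_def by (auto intro: homog_diff)
  then have homog_h: "homog n d (fst h)" "homog n d (snd h)"
    unfolding h_def using homog_mult[OF homog_const] by (auto intro!: homog_add)
  have value_h: "(mpol_eval (fst h) x, mpol_eval (snd h) x) = (if proj_eq p0 x then p1 else p2)"
    if "proj_pt n x" for x
    using mpol_eval_off_point_form[OF \<open>proj_pt n p0\<close> that k]
      mpol_eval_nonzero_indicator_vars[OF that]
    by (simp add: h_def Phi_def Psi_def mpol_eval_add mpol_eval_mult mpol_eval_diff)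
  have "proj_eq p0 p0"
    unfolding proj_eq_def by (intro exI[of _ 1]) simp
  then have "h \<noteq> (0, 0)"
    using value_h[OF \<open>proj_pt n p0\<close>] \<open>proj1_pt p1\<close> unfolding proj1_pt_def by auto
  then have "rat_map_rep n h"
    unfolding rat_map_rep_def using homog_h by auto
  then show ?thesis
    using rat_map_value_of_rep value_h \<open>proj_eq p0 p0\<close> assms(2-4) by metis
qed

end
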